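(* Let $c \in (0,1/2]$, $t_1 \in [0,1-2c]$, $t_2 \in [t_1+c,1-c]$, and let $p,q \in (0,1)$ with $p \neq q$. Let $F$, $\mu_p$, $\mu_q$, $\Lambda_{p,q}$ and $\gamma_r$ be as described in the context. Then for every $r \in \Lambda_{p,q}$, \[ \int_{F \times F} |x-y| \, d\gamma_r(x,y) \;=\; \frac{t_2-t_1}{1-c}\, \frac{c(p-q)^2+(1-c)(p+q-2r)}{(1-c)+c(p+q-2r)}. \]
   Context: Let $S_1(x)=cx+t_1$ and $S_2(x)=cx+t_2$ on $[0,1]$. Let $F\subseteq[0,1]$ be the unique nonempty compact set with $F=S_1(F)\cup S_2(F)$. For $p\in(0,1)$, $\mu_p$ is the unique Borel probability measure with $\mu_p = p\,\mu_p\circ S_1^{-1} + (1-p)\,\mu_p\circ S_2^{-1}$ (supported on $F$). On $[0,1]^2$ define $S_{i,j}(x,y)=(S_i(x),S_j(y))$ for $i,j\in\{1,2\}$. Let $\Lambda_{p,q}$ be the open interval $\max\{0,p+q-1\}<r<\min\{p,q\}$. For $r\in\Lambda_{p,q}$, $\gamma_r$ is the unique Borel probability measure on $[0,1]^2$ satisfying $\gamma_r = r\,\gamma_r\circ S_{1,1}^{-1} + (p-r)\,\gamma_r\circ S_{1,2}^{-1} + (q-r)\,\gamma_r\circ S_{2,1}^{-1} + (1-p-q+r)\,\gamma_r\circ S_{2,2}^{-1}$; it is supported on $F\times F$ and is a coupling of $\mu_p$ and $\mu_q$ (its first marginal is $\mu_p$, its second is $\mu_q$). *)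

theory Defs
  imports "HOL-Analysis.Analysis" "HOL-Probability.Probability"
begin

definition sim :: "real \<Rightarrow> real \<Rightarrow> real \<Rightarrow> real" where
  "sim c t x = c * x + t"

definition attractor :: "real \<Rightarrow> real \<Rightarrow> real \<Rightarrow> real set" where
  "attractor c t1 t2 = (THE F. F \<noteq> {} \<and> compact F \<and> F = sim c t1 ` F \<union> sim c t2 ` F)"

definition sim2 :: "real \<Rightarrow> real \<Rightarrow> real \<Rightarrow> real \<times> real \<Rightarrow> real \<times> real" where
  "sim2 c ti tj z = (sim c ti (fst z), sim c tj (snd z))"

text \<open>gamma is a Borel probability measure on [0,1]^2 satisfying the self-similarity
  equation with weights r, p-r, q-r, 1-p-q+r (this determines gamma_r uniquely).\<close>
definition is_gamma :: "real \<Rightarrow> real \<Rightarrow> real \<Rightarrow> real \<Rightarrow> real \<Rightarrow> real \<Rightarrow> (real \<times> real) measure \<Rightarrow> bool" where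
  "is_gamma c t1 t2 p q r M \<longleftrightarrow>
     sets M = sets borel \<and> prob_space M \<and> emeasure M ({0..1} \<times> {0..1}) = 1 \<and>
     (\<forall>A \<in> sets borel.
        measure M A = r * measure M (sim2 c t1 t1 -` A)
                    + (p - r) * measure M (sim2 c t1 t2 -` A)
                    + (q - r) * measure M (sim2 c t2 t1 -` A)
                    + (1 - p - q + r) * measure M (sim2 c t2 t2 -` A))"

end

theory Submission
  imports Defs
begin

text \<open>
  The attractor F lies in J = [t1/(1-c), t2/(1-c)], the interval spanned by the fixed points of
  S_1 and S_2, and \<gamma>_r is concentrated on F \<times> F, because \<gamma>_r gives full measure to every
  product K_n \<times> K_n of the Hutchinson iterates K_n of [0,1]. Integrating the coordinates and
  |x - y| against the self-similarity equation of \<gamma>_r then gives linear equations for the means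
  m_1, m_2 and for D = \<integral> |x - y| d\<gamma>_r. On the diagonal pieces S_{i,i} the integrand is scaled by c.
  On the off-diagonal pieces, c \<le> 1/2 gives c |x - y| \<le> c |J| \<le> t_2 - t_1 on J \<times> J, so
  |S_1 x - S_2 y| = c (y - x) + (t_2 - t_1) has a fixed sign and its integral is c (m_2 - m_1) + t_2 - t_1.
  Solving, (1-c)(m_2 - m_1) = (p - q)(t_2 - t_1) and
  ((1-c) + c (p+q-2r)) D = (p+q-2r)(t_2 - t_1) + c (p - q)(m_2 - m_1).
\<close>

section \<open>The attractor\<close>

lemma abs_sim_diff: "0 \<le> c \<Longrightarrow> \<bar>sim c t x - sim c t y\<bar> = c * \<bar>x - y\<bar>"
  by (simp add: sim_def abs_mult flip: right_diff_distrib)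

lemma sim_mem_fixed_point_interval:
  assumes "0 \<le> c" "c < 1" "t1 \<le> t" "t \<le> t2" "x \<in> {t1/(1-c) .. t2/(1-c)}"
  shows "sim c t x \<in> {t1/(1-c) .. t2/(1-c)}"
proof -
  have "t1/(1-c) = c * (t1/(1-c)) + t1" "t2/(1-c) = c * (t2/(1-c)) + t2"
    using assms(2) by (simp_all add: field_simps)
  moreover have "c * (t1/(1-c)) \<le> c * x"
    using assms by (intro mult_left_mono) auto
  moreover have "c * x \<le> c * (t2/(1-c))"
    using assms by (intro mult_left_mono) auto
  ultimately show ?thesis
    using assms(3,4) unfolding sim_def atLeastAtMost_iff by linarith
qed

lemma contracting_cover_near_invariant:
  assumes c: "0 \<le> c"
    and K: "\<And>n. K (Suc n) \<subseteq> sim c t1 ` K n \<union> sim c t2 ` K n"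
    and B: "sim c t1 ` B \<subseteq> B" "sim c t2 ` B \<subseteq> B"
    and K0: "\<And>x. x \<in> K 0 \<Longrightarrow> \<exists>y\<in>B. \<bar>x - y\<bar> \<le> R"
  shows "x \<in> K n \<Longrightarrow> \<exists>y\<in>B. \<bar>x - y\<bar> \<le> c ^ n * R"
proof (induction n arbitrary: x)
  case 0
  then show ?case using K0 by simp
next
  case (Suc n)
  then obtain t x' where t: "t = t1 \<or> t = t2" and x': "x' \<in> K n" "x = sim c t x'"
    using K[of n] by blast
  obtain y where y: "y \<in> B" "\<bar>x' - y\<bar> \<le> c ^ n * R"
    using Suc.IH[OF x'(1)] by blast
  have "sim c t y \<in> B"
    using t y(1) B by blast
  moreover have "\<bar>x - sim c t y\<bar> \<le> c ^ Suc n * R"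
    using mult_left_mono[OF y(2) c] by (simp add: x'(2) abs_sim_diff[OF c] mult.assoc)
  ultimately show ?case by blast
qed

lemma contracting_cover_Inter_subset_invariant:
  assumes c: "0 < c" "c < 1"
    and K: "\<And>n. K (Suc n) \<subseteq> sim c t1 ` K n \<union> sim c t2 ` K n" "bounded (K 0)"
    and B: "closed B" "B \<noteq> {}" "sim c t1 ` B \<subseteq> B" "sim c t2 ` B \<subseteq> B"
  shows "(\<Inter>n. K n) \<subseteq> B"
proof
  fix x assume x: "x \<in> (\<Inter>n. K n)"
  obtain y0 where y0: "y0 \<in> B"
    using B(2) by blast
  obtain e where "\<forall>z\<in>K 0. dist y0 z \<le> e"
    using K(2) bounded_any_center by blast
  then have near: "\<exists>y\<in>B. \<bar>z - y\<bar> \<le> \<bar>e\<bar> + 1" if "z \<in> K 0" for z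
    using that y0 by (force simp: dist_real_def)
  have "\<exists>y\<in>B. dist y x < d" if "0 < d" for d
  proof -
    have "0 < d / (\<bar>e\<bar> + 1)"
      using that by simp
    then obtain n where "c ^ n < d / (\<bar>e\<bar> + 1)"
      using real_arch_pow_inv c by blast
    then have "c ^ n * (\<bar>e\<bar> + 1) < d"
      by (simp add: field_simps)
    moreover obtain y where "y \<in> B" "\<bar>x - y\<bar> \<le> c ^ n * (\<bar>e\<bar> + 1)"
      using contracting_cover_near_invariant[where K = K, OF less_imp_le[OF c(1)] K(1) B(3,4) near, of x n] x
      by blast
    ultimately show ?thesis
      by (metis abs_minus_commute dist_real_def order.strict_trans1)
  qed
  then show "x \<in> B"
    using closed_approachable[OF B(1)] by blast
qed

lemma self_similar_compact_eq:
  assumes c: "0 < c" "c < 1"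
    and F: "F \<noteq> {}" "compact F" "F = sim c t1 ` F \<union> sim c t2 ` F"
    and G: "G \<noteq> {}" "compact G" "G = sim c t1 ` G \<union> sim c t2 ` G"
  shows "F = G"
proof -
  have "A \<subseteq> B"
    if A: "compact A" "A = sim c t1 ` A \<union> sim c t2 ` A"
      and B: "B \<noteq> {}" "compact B" "B = sim c t1 ` B \<union> sim c t2 ` B" for A B
  proof -
    have "(\<Inter>n::nat. A) \<subseteq> B"
    proof (rule contracting_cover_Inter_subset_invariant[OF c])
      show "A \<subseteq> sim c t1 ` A \<union> sim c t2 ` A"
        using A(2) by (rule equalityD1)
      show "sim c t1 ` B \<subseteq> B" "sim c t2 ` B \<subseteq> B"
        using equalityD2[OF B(3)] by simp_all
    qed (use A(1) B(1,2) in \<open>simp_all add: compact_imp_bounded compact_imp_closed\<close>)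
    then show ?thesis by simp
  qed
  then show ?thesis
    using subset_antisym F G by metis
qed

primrec sim_iterates :: "real \<Rightarrow> real \<Rightarrow> real \<Rightarrow> real set \<Rightarrow> nat \<Rightarrow> real set" where
  "sim_iterates c t1 t2 A 0 = A"
| "sim_iterates c t1 t2 A (Suc n) =
     sim c t1 ` sim_iterates c t1 t2 A n \<union> sim c t2 ` sim_iterates c t1 t2 A n"

lemma compact_sim_iterates: "compact A \<Longrightarrow> compact (sim_iterates c t1 t2 A n)"
  by (induction n) (auto simp: sim_def intro!: compact_Un compact_continuous_image continuous_intros)

inductive_set sim_orbit :: "real \<Rightarrow> real \<Rightarrow> real \<Rightarrow> real set" for c t1 t2 where
  fixed_point: "t1 / (1 - c) \<in> sim_orbit c t1 t2"
| image1: "x \<in> sim_orbit c t1 t2 \<Longrightarrow> sim c t1 x \<in> sim_orbit c t1 t2"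
| image2: "x \<in> sim_orbit c t1 t2 \<Longrightarrow> sim c t2 x \<in> sim_orbit c t1 t2"

lemma sim_orbit_subset_interval:
  assumes "0 \<le> c" "c < 1" "t1 \<le> t2"
  shows "sim_orbit c t1 t2 \<subseteq> {t1/(1-c) .. t2/(1-c)}"
proof
  fix x assume "x \<in> sim_orbit c t1 t2"
  then show "x \<in> {t1/(1-c) .. t2/(1-c)}"
  proof induction
    case fixed_point
    show ?case
      using assms by (auto intro: divide_right_mono)
  qed (rule sim_mem_fixed_point_interval; use assms in auto)+
qed

lemma sim_orbit_self_similar:
  assumes "c < 1"
  shows "sim_orbit c t1 t2 = sim c t1 ` sim_orbit c t1 t2 \<union> sim c t2 ` sim_orbit c t1 t2"
proof
  show "sim_orbit c t1 t2 \<subseteq> sim c t1 ` sim_orbit c t1 t2 \<union> sim c t2 ` sim_orbit c t1 t2"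
  proof
    fix x assume "x \<in> sim_orbit c t1 t2"
    then show "x \<in> sim c t1 ` sim_orbit c t1 t2 \<union> sim c t2 ` sim_orbit c t1 t2"
    proof cases
      case fixed_point
      then have "x = sim c t1 (t1 / (1 - c))"
        using assms by (simp add: sim_def field_simps)
      then show ?thesis
        using sim_orbit.fixed_point by blast
    qed auto
  qed
qed (auto intro: sim_orbit.intros)

lemma closure_image_sim:
  assumes "bounded X"
  shows "closure (sim c t ` X) = sim c t ` closure X"
proof
  have cont: "continuous_on S (sim c t)" for S
    unfolding sim_def by (intro continuous_intros)
  show "sim c t ` closure X \<subseteq> closure (sim c t ` X)"
    by (rule image_closure_subset[OF cont closed_closure closure_subset])
  have "compact (sim c t ` closure X)"
    using assms by (intro compact_continuous_image cont) (simp add: compact_closure)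
  then show "closure (sim c t ` X) \<subseteq> sim c t ` closure X"
    by (intro closure_minimal compact_imp_closed) (auto intro: closure_subset[THEN subsetD])
qed

lemma closure_sim_orbit:
  assumes "0 \<le> c" "c < 1" "t1 \<le> t2"
  defines "G \<equiv> closure (sim_orbit c t1 t2)"
  shows "G \<noteq> {}" "compact G" "G = sim c t1 ` G \<union> sim c t2 ` G"
    "G \<subseteq> {t1/(1-c) .. t2/(1-c)}"
proof -
  have sub: "sim_orbit c t1 t2 \<subseteq> {t1/(1-c) .. t2/(1-c)}"
    using sim_orbit_subset_interval[OF assms(1-3)] .
  then have bnd: "bounded (sim_orbit c t1 t2)"
    using bounded_subset bounded_closed_interval by blast
  show "G \<noteq> {}"
    unfolding G_def using sim_orbit.fixed_point by blast
  show "compact G"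
    unfolding G_def using bnd by (simp add: compact_closure)
  show "G = sim c t1 ` G \<union> sim c t2 ` G"
    using arg_cong[where f = closure, OF sim_orbit_self_similar[OF assms(2), of t1 t2]]
    unfolding G_def closure_Un closure_image_sim[OF bnd] .
  show "G \<subseteq> {t1/(1-c) .. t2/(1-c)}"
    unfolding G_def using sub by (simp add: closure_minimal)
qed

lemma attractor_eq_closure_sim_orbit:
  assumes "0 < c" "c < 1" "t1 \<le> t2"
  shows "attractor c t1 t2 = closure (sim_orbit c t1 t2)"
  unfolding attractor_def
proof (rule the_equality)
  note G = closure_sim_orbit[OF less_imp_le[OF assms(1)] assms(2,3)]
  show "closure (sim_orbit c t1 t2) \<noteq> {} \<and> compact (closure (sim_orbit c t1 t2))
      \<and> closure (sim_orbit c t1 t2)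
        = sim c t1 ` closure (sim_orbit c t1 t2) \<union> sim c t2 ` closure (sim_orbit c t1 t2)"
    using G(1-3) by (intro conjI)
  show "F = closure (sim_orbit c t1 t2)"
    if "F \<noteq> {} \<and> compact F \<and> F = sim c t1 ` F \<union> sim c t2 ` F" for F
    using that by (elim conjE) (rule self_similar_compact_eq[OF assms(1,2) _ _ _ G(1-3)]; assumption)
qed

lemma
  assumes "0 < c" "c < 1" "t1 \<le> t2"
  shows attractor_nonempty: "attractor c t1 t2 \<noteq> {}"
    and compact_attractor: "compact (attractor c t1 t2)"
    and attractor_self_similar:
      "attractor c t1 t2 = sim c t1 ` attractor c t1 t2 \<union> sim c t2 ` attractor c t1 t2"
    and attractor_subset_interval: "attractor c t1 t2 \<subseteq> {t1/(1-c) .. t2/(1-c)}"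
  unfolding attractor_eq_closure_sim_orbit[OF assms]
  by (fact closure_sim_orbit[OF less_imp_le[OF assms(1)] assms(2,3)])+

section \<open>Integrals against self-similar measures\<close>

lemma nn_integral_self_similar:
  fixes M :: "'a::topological_space measure" and w :: "'i \<Rightarrow> ennreal"
  assumes sets_M: "sets M = sets borel"
    and g: "\<And>i. i \<in> I \<Longrightarrow> g i \<in> borel_measurable borel"
    and eq: "\<And>A. A \<in> sets borel \<Longrightarrow> emeasure M A = (\<Sum>i\<in>I. w i * emeasure M (g i -` A))"
    and u: "u \<in> borel_measurable borel"
  shows "(\<integral>\<^sup>+z. u z \<partial>M) = (\<Sum>i\<in>I. w i * (\<integral>\<^sup>+z. u (g i z) \<partial>M))"
proof -
  have meas: "f \<in> borel_measurable M" if "f \<in> borel_measurable borel" for f :: "'a \<Rightarrow> ennreal"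
    using that measurable_cong_sets[OF sets_M refl] by blast
  have meas_g: "(\<lambda>z. f (g i z)) \<in> borel_measurable M"
    if "i \<in> I" "f \<in> borel_measurable borel" for i and f :: "'a \<Rightarrow> ennreal"
    using meas[OF measurable_compose[OF g that(2)]] that(1) .
  from u show ?thesis
  proof (induction rule: borel_measurable_induct)
    case (cong f h)
    then show ?case by simp
  next
    case (set A)
    have "(\<integral>\<^sup>+z. indicator A (g i z) \<partial>M) = emeasure M (g i -` A)" if "i \<in> I" for i
      using measurable_sets[OF g[OF that] set] sets_M by (simp flip: indicator_vimage)
    then show ?case
      using set sets_M by (simp add: eq cong: sum.cong)
  next
    case (mult v a)
    then show ?case
      by (simp add: nn_integral_cmult meas meas_g sum_distrib_left mult.left_commute cong: sum.cong)
  next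
    case (add v h)
    then show ?case
      by (simp add: nn_integral_add meas meas_g sum.distrib distrib_left cong: sum.cong)
  next
    case (seq U)
    have inc: "incseq (\<lambda>n z. U n (g i z))" for i
      using \<open>incseq U\<close> by (auto simp: incseq_def le_fun_def)
    have "(\<integral>\<^sup>+z. (SUP n. U n) z \<partial>M) = (SUP n. \<integral>\<^sup>+z. U n z \<partial>M)"
      unfolding SUP_apply by (rule nn_integral_monotone_convergence_SUP[OF \<open>incseq U\<close> meas[OF seq(1)]])
    also have "\<dots> = (SUP n. \<Sum>i\<in>I. w i * (\<integral>\<^sup>+z. U n (g i z) \<partial>M))"
      using seq.IH by simp
    also have "\<dots> = (\<Sum>i\<in>I. SUP n. w i * (\<integral>\<^sup>+z. U n (g i z) \<partial>M))"
      using inc by (intro ennreal_SUP_sum)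
        (auto simp: incseq_def le_fun_def intro!: mult_left_mono nn_integral_mono)
    also have "\<dots> = (\<Sum>i\<in>I. w i * (\<integral>\<^sup>+z. (SUP n. U n) (g i z) \<partial>M))"
    proof (intro sum.cong refl)
      fix i assume "i \<in> I"
      have "(\<integral>\<^sup>+z. (SUP n. U n) (g i z) \<partial>M) = (SUP n. \<integral>\<^sup>+z. U n (g i z) \<partial>M)"
        unfolding SUP_apply
        by (rule nn_integral_monotone_convergence_SUP[OF inc meas_g[OF \<open>i \<in> I\<close> seq(1)]])
      then show "(SUP n. w i * (\<integral>\<^sup>+z. U n (g i z) \<partial>M)) = w i * (\<integral>\<^sup>+z. (SUP n. U n) (g i z) \<partial>M)"
        by (simp add: SUP_mult_left_ennreal)
    qed
    finally show ?case .
  qed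
qed

lemma integral_self_similar:
  fixes M :: "'a::topological_space measure" and f :: "'a \<Rightarrow> real"
  assumes sets_M: "sets M = sets borel" and "finite_measure M"
    and g: "\<And>i. i \<in> I \<Longrightarrow> g i \<in> borel_measurable borel"
    and w: "\<And>i. i \<in> I \<Longrightarrow> 0 \<le> w i"
    and eq: "\<And>A. A \<in> sets borel \<Longrightarrow> measure M A = (\<Sum>i\<in>I. w i * measure M (g i -` A))"
    and S: "AE z in M. z \<in> S" "\<And>i z. i \<in> I \<Longrightarrow> z \<in> S \<Longrightarrow> g i z \<in> S"
    and f: "f \<in> borel_measurable borel" "\<And>z. z \<in> S \<Longrightarrow> 0 \<le> f z \<and> f z \<le> B"
  shows "integral\<^sup>L M f = (\<Sum>i\<in>I. w i * integral\<^sup>L M (\<lambda>z. f (g i z)))"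
proof -
  interpret finite_measure M by fact
  have bounded_on_S: "integrable M h \<and> (AE z in M. 0 \<le> h z)"
    if "h \<in> borel_measurable borel" "\<And>z. z \<in> S \<Longrightarrow> 0 \<le> h z \<and> h z \<le> B"
    for h :: "'a \<Rightarrow> real"
  proof
    have "AE z in M. norm (h z) \<le> B"
      using S(1) by eventually_elim (use that(2) in force)
    moreover have "h \<in> borel_measurable M"
      using that(1) measurable_cong_sets[OF sets_M refl] by blast
    ultimately show "integrable M h"
      by (rule integrable_const_bound)
    show "AE z in M. 0 \<le> h z"
      using S(1) by eventually_elim (use that(2) in blast)
  qed
  have f_int: "integrable M f" "AE z in M. 0 \<le> f z"
    using bounded_on_S[OF f] by blast+
  have fg_int: "integrable M (\<lambda>z. f (g i z))" "AE z in M. 0 \<le> f (g i z)" if "i \<in> I" for i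
    using bounded_on_S[OF measurable_compose[OF g[OF that] f(1)]] f(2) S(2)[OF that] by blast+
  have emeasure_eq: "emeasure M A = (\<Sum>i\<in>I. ennreal (w i) * emeasure M (g i -` A))"
    if "A \<in> sets borel" for A
    using eq[OF that] w by (simp add: emeasure_eq_measure sum_ennreal[symmetric] ennreal_mult)
  have "ennreal (integral\<^sup>L M f) = (\<integral>\<^sup>+z. ennreal (f z) \<partial>M)"
    using nn_integral_eq_integral[OF f_int] by simp
  also have "\<dots> = (\<Sum>i\<in>I. ennreal (w i) * (\<integral>\<^sup>+z. ennreal (f (g i z)) \<partial>M))"
    using f(1) by (intro nn_integral_self_similar[OF sets_M g emeasure_eq]) simp_all
  also have "\<dots> = ennreal (\<Sum>i\<in>I. w i * integral\<^sup>L M (\<lambda>z. f (g i z)))"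
    using w fg_int
    by (simp add: nn_integral_eq_integral integral_nonneg_AE sum_ennreal[symmetric] ennreal_mult
        cong: sum.cong)
  finally show ?thesis
    using f_int fg_int w by (simp add: integral_nonneg_AE sum_nonneg)
qed

lemma measure_eq_1_if_subset_preimages:
  fixes M :: "'a::topological_space measure"
  assumes "prob_space M" and sets_M: "sets M = sets borel"
    and g: "\<And>i. i \<in> I \<Longrightarrow> g i \<in> borel_measurable borel"
    and w: "\<And>i. i \<in> I \<Longrightarrow> 0 \<le> w i" "(\<Sum>i\<in>I. w i) = 1"
    and eq: "\<And>A. A \<in> sets borel \<Longrightarrow> measure M A = (\<Sum>i\<in>I. w i * measure M (g i -` A))"
    and "B \<in> sets borel" "measure M A = 1" "\<And>i. i \<in> I \<Longrightarrow> A \<subseteq> g i -` B"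
  shows "measure M B = 1"
proof -
  interpret prob_space M by fact
  have "1 = (\<Sum>i\<in>I. w i * measure M A)"
    using assms(8) w(2) by (simp flip: sum_distrib_right)
  also have "\<dots> \<le> (\<Sum>i\<in>I. w i * measure M (g i -` B))"
  proof (intro sum_mono mult_left_mono w(1) finite_measure_mono)
    fix i assume i: "i \<in> I"
    show "A \<subseteq> g i -` B"
      using assms(9)[OF i] .
    show "g i -` B \<in> sets M"
      using measurable_sets[OF g[OF i] assms(7)] sets_M by simp
  qed
  also have "\<dots> = measure M B"
    using eq[OF assms(7)] by simp
  finally show ?thesis
    using prob_le_1 by (intro antisym)
qed

section \<open>The coupling \<gamma>_r\<close>

lemma sum_UNIV_bool_pair:
  fixes h :: "bool \<times> bool \<Rightarrow> 'a::comm_monoid_add"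
  shows "(\<Sum>ij\<in>UNIV. h ij) = h (True, True) + h (True, False) + h (False, True) + h (False, False)"
  by (simp add: UNIV_Times_UNIV[symmetric] UNIV_bool ac_simps del: UNIV_Times_UNIV)

lemma abs_sim_diff_sim:
  assumes "0 \<le> c" "c \<le> 1/2" "t1 \<le> t2"
    and "x \<in> {t1/(1-c) .. t2/(1-c)}" "y \<in> {t1/(1-c) .. t2/(1-c)}"
  shows "\<bar>sim c t1 x - sim c t2 y\<bar> = c * (y - x) + (t2 - t1)"
proof -
  have "c * (x - y) \<le> c * ((t2 - t1) / (1 - c))"
    using assms by (intro mult_left_mono) (auto simp: diff_divide_distrib)
  also have "\<dots> \<le> t2 - t1"
  proof -
    have "c * (t2 - t1) \<le> (1 - c) * (t2 - t1)"
      using assms by (intro mult_right_mono) auto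
    then show ?thesis
      using assms by (simp add: field_simps)
  qed
  finally show ?thesis
    by (simp add: sim_def abs_if algebra_simps)
qed

locale gamma_coupling =
  fixes c t1 t2 p q r :: real and M :: "(real \<times> real) measure"
  assumes c: "0 < c" "c \<le> 1/2"
    and t: "0 \<le> t1" "t1 \<le> t2"
    and r: "0 \<le> r" "r \<le> p" "r \<le> q" "p + q - 1 \<le> r"
    and gamma: "is_gamma c t1 t2 p q r M"
begin

sublocale prob_space M
  using gamma by (simp add: is_gamma_def)

lemma sets_M: "sets M = sets borel"
  using gamma by (simp add: is_gamma_def)

lemma c_less_1: "c < 1"
  using c by simp

abbreviation J :: "real set" where
  "J \<equiv> {t1/(1-c) .. t2/(1-c)}"

definition piece :: "bool \<times> bool \<Rightarrow> real \<times> real \<Rightarrow> real \<times> real" where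
  "piece ij = sim2 c (if fst ij then t1 else t2) (if snd ij then t1 else t2)"

definition weight :: "bool \<times> bool \<Rightarrow> real" where
  "weight ij = (if fst ij then if snd ij then r else p - r else if snd ij then q - r else 1 - p - q + r)"

lemma weight_nonneg: "0 \<le> weight ij"
  using r by (auto simp: weight_def)

lemma sum_weight: "(\<Sum>ij\<in>UNIV. weight ij) = 1"
  by (simp add: sum_UNIV_bool_pair weight_def)

lemma piece_measurable: "piece ij \<in> borel_measurable borel"
  unfolding piece_def sim2_def sim_def by (intro borel_measurable_continuous_onI continuous_intros)

lemma measure_self_similar:
  "A \<in> sets borel \<Longrightarrow> measure M A = (\<Sum>ij\<in>UNIV. weight ij * measure M (piece ij -` A))"
  using gamma by (simp add: is_gamma_def sum_UNIV_bool_pair weight_def piece_def)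

lemma piece_mem_square:
  assumes "z \<in> J \<times> J"
  shows "piece ij z \<in> J \<times> J"
proof -
  have "sim c u x \<in> J" if "u = t1 \<or> u = t2" "x \<in> J" for u x
    using that c(1) c_less_1 t(2) by (intro sim_mem_fixed_point_interval) auto
  then show ?thesis
    using assms by (auto simp: piece_def sim2_def mem_Times_iff)
qed

lemma AE_in_attractor: "AE z in M. z \<in> attractor c t1 t2 \<times> attractor c t1 t2"
proof -
  define K where "K = sim_iterates c t1 t2 {0..1}"
  have "measure M (K n \<times> K n) = 1" for n
  proof (induction n)
    case 0
    then show ?case
      using gamma by (simp add: K_def is_gamma_def measure_def)
  next
    case (Suc n)
    show ?case
    proof (rule measure_eq_1_if_subset_preimages[OF prob_space_axioms sets_M piece_measurable
          weight_nonneg sum_weight measure_self_similar _ Suc])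
      show "K (Suc n) \<times> K (Suc n) \<in> sets borel"
        unfolding K_def
        by (intro borel_closed closed_Times compact_imp_closed compact_sim_iterates) auto
      show "K n \<times> K n \<subseteq> piece ij -` (K (Suc n) \<times> K (Suc n))" for ij
        by (auto simp: K_def piece_def sim2_def)
    qed
  qed
  then have AE_iterates: "AE z in M. \<forall>n. z \<in> K n \<times> K n"
    by (simp add: AE_all_countable AE_prob_1)
  have "(\<Inter>n. K n) \<subseteq> attractor c t1 t2"
  proof (rule contracting_cover_Inter_subset_invariant[OF c(1) c_less_1])
    note F = attractor_nonempty[OF c(1) c_less_1 t(2)] compact_attractor[OF c(1) c_less_1 t(2)]
      equalityD2[OF attractor_self_similar[OF c(1) c_less_1 t(2)]]
    show "closed (attractor c t1 t2)"
      using F(2) by (rule compact_imp_closed)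
    show "sim c t1 ` attractor c t1 t2 \<subseteq> attractor c t1 t2"
      "sim c t2 ` attractor c t1 t2 \<subseteq> attractor c t1 t2"
      using F(3) by simp_all
  qed (use attractor_nonempty[OF c(1) c_less_1 t(2)] in \<open>simp_all add: K_def\<close>)
  with AE_iterates show ?thesis
    by (auto elim!: eventually_mono simp: mem_Times_iff)
qed

lemma AE_in_square: "AE z in M. z \<in> J \<times> J"
  using AE_in_attractor
  by eventually_elim (use attractor_subset_interval[OF c(1) c_less_1 t(2)] in auto)

lemma borel_measurable_M: "f \<in> borel_measurable borel \<Longrightarrow> f \<in> borel_measurable M"
  using measurable_cong_sets[OF sets_M refl] by blast

lemma left_end_nonneg: "0 \<le> t1/(1-c)"
  using t c_less_1 by simp

lemma integrable_bounded_on_square: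
  fixes h :: "real \<times> real \<Rightarrow> real"
  assumes "h \<in> borel_measurable borel" "\<And>z. z \<in> J \<times> J \<Longrightarrow> \<bar>h z\<bar> \<le> B"
  shows "integrable M h"
proof (rule integrable_const_bound)
  show "AE z in M. norm (h z) \<le> B"
    using AE_in_square by eventually_elim (use assms(2) in simp)
qed (rule borel_measurable_M[OF assms(1)])

lemma integrable_fst: "integrable M fst" and integrable_snd: "integrable M snd"
  using left_end_nonneg
  by (auto intro!: integrable_bounded_on_square[where B = "t2/(1-c)"] borel_measurable_continuous_onI
      continuous_intros)

lemma integral_affine:
  fixes h :: "real \<times> real \<Rightarrow> real"
  assumes "integrable M h"
  shows "(\<integral>z. a * h z + b \<partial>M) = a * integral\<^sup>L M h + b"
  using assms by (simp add: Bochner_Integration.integral_add prob_space)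

lemma integral_pieces:
  assumes "f \<in> borel_measurable borel" "\<And>z. z \<in> J \<times> J \<Longrightarrow> 0 \<le> f z \<and> f z \<le> B"
  shows "integral\<^sup>L M f = (\<Sum>ij\<in>UNIV. weight ij * integral\<^sup>L M (\<lambda>z. f (piece ij z)))"
  by (rule integral_self_similar[OF sets_M finite_measure_axioms piece_measurable weight_nonneg
        measure_self_similar AE_in_square piece_mem_square assms])

lemma mean_fst: "(1 - c) * integral\<^sup>L M fst = p * t1 + (1 - p) * t2"
proof -
  have "integral\<^sup>L M fst = (\<Sum>ij\<in>UNIV. weight ij * integral\<^sup>L M (\<lambda>z. fst (piece ij z)))"
    using left_end_nonneg
    by (intro integral_pieces[where B = "t2/(1-c)"] borel_measurable_continuous_onI continuous_intros)
      (auto simp: mem_Times_iff)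
  also have "\<dots> = c * integral\<^sup>L M fst + p * t1 + (1 - p) * t2"
    by (simp add: sum_UNIV_bool_pair weight_def piece_def sim2_def sim_def integral_affine
        integrable_fst prob_space algebra_simps)
  finally show ?thesis
    by (simp add: algebra_simps)
qed

lemma mean_snd: "(1 - c) * integral\<^sup>L M snd = q * t1 + (1 - q) * t2"
proof -
  have "integral\<^sup>L M snd = (\<Sum>ij\<in>UNIV. weight ij * integral\<^sup>L M (\<lambda>z. snd (piece ij z)))"
    using left_end_nonneg
    by (intro integral_pieces[where B = "t2/(1-c)"] borel_measurable_continuous_onI continuous_intros)
      (auto simp: mem_Times_iff)
  also have "\<dots> = c * integral\<^sup>L M snd + q * t1 + (1 - q) * t2"
    by (simp add: sum_UNIV_bool_pair weight_def piece_def sim2_def sim_def integral_affine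
        integrable_snd prob_space algebra_simps)
  finally show ?thesis
    by (simp add: algebra_simps)
qed

lemma integral_abs_diff_piece_diagonal:
  "(\<integral>z. \<bar>fst (piece (i, i) z) - snd (piece (i, i) z)\<bar> \<partial>M) = c * (\<integral>z. \<bar>fst z - snd z\<bar> \<partial>M)"
  using c by (simp add: piece_def sim2_def abs_sim_diff)

lemma integral_abs_diff_piece_cross:
  "(\<integral>z. \<bar>fst (piece (True, False) z) - snd (piece (True, False) z)\<bar> \<partial>M)
     = c * (integral\<^sup>L M snd - integral\<^sup>L M fst) + (t2 - t1)"
  "(\<integral>z. \<bar>fst (piece (False, True) z) - snd (piece (False, True) z)\<bar> \<partial>M)
     = c * (integral\<^sup>L M fst - integral\<^sup>L M snd) + (t2 - t1)"
proof -
  have "AE z in M. \<bar>fst (piece (True, False) z) - snd (piece (True, False) z)\<bar>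
      = c * (snd z - fst z) + (t2 - t1)"
    using AE_in_square
    by eventually_elim (use c t in \<open>simp add: piece_def sim2_def abs_sim_diff_sim mem_Times_iff\<close>)
  then have "(\<integral>z. \<bar>fst (piece (True, False) z) - snd (piece (True, False) z)\<bar> \<partial>M)
      = (\<integral>z. c * (snd z - fst z) + (t2 - t1) \<partial>M)"
    by (intro integral_cong_AE borel_measurable_M)
      (simp_all add: piece_def sim2_def sim_def borel_measurable_continuous_onI continuous_intros)
  then show "(\<integral>z. \<bar>fst (piece (True, False) z) - snd (piece (True, False) z)\<bar> \<partial>M)
     = c * (integral\<^sup>L M snd - integral\<^sup>L M fst) + (t2 - t1)"
    using integrable_fst integrable_snd by (simp add: integral_affine prob_space)
  have "AE z in M. \<bar>fst (piece (False, True) z) - snd (piece (False, True) z)\<bar>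
      = c * (fst z - snd z) + (t2 - t1)"
    using AE_in_square
    by eventually_elim
      (use c t in \<open>simp add: piece_def sim2_def abs_sim_diff_sim abs_minus_commute mem_Times_iff\<close>)
  then have "(\<integral>z. \<bar>fst (piece (False, True) z) - snd (piece (False, True) z)\<bar> \<partial>M)
      = (\<integral>z. c * (fst z - snd z) + (t2 - t1) \<partial>M)"
    by (intro integral_cong_AE borel_measurable_M)
      (simp_all add: piece_def sim2_def sim_def borel_measurable_continuous_onI continuous_intros)
  then show "(\<integral>z. \<bar>fst (piece (False, True) z) - snd (piece (False, True) z)\<bar> \<partial>M)
     = c * (integral\<^sup>L M fst - integral\<^sup>L M snd) + (t2 - t1)"
    using integrable_fst integrable_snd by (simp add: integral_affine prob_space)
qed

lemma integral_abs_diff: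
  "(\<integral>z. \<bar>fst z - snd z\<bar> \<partial>M)
     = (t2 - t1) / (1 - c) * ((c * (p - q)^2 + (1 - c) * (p + q - 2*r)) / ((1 - c) + c * (p + q - 2*r)))"
proof -
  define D where "D = (\<integral>z. \<bar>fst z - snd z\<bar> \<partial>M)"
  define m1 m2 where "m1 = integral\<^sup>L M fst" and "m2 = integral\<^sup>L M snd"
  have means: "(1 - c) * (m2 - m1) = (p - q) * (t2 - t1)"
    using mean_fst mean_snd unfolding m1_def m2_def by algebra
  have "D = (\<Sum>ij\<in>UNIV. weight ij * (\<integral>z. \<bar>fst (piece ij z) - snd (piece ij z)\<bar> \<partial>M))"
    unfolding D_def using left_end_nonneg
    by (intro integral_pieces[where B = "t2/(1-c)"] borel_measurable_continuous_onI continuous_intros)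
      (auto simp: mem_Times_iff)
  also have "\<dots> = (r + (1 - p - q + r)) * (c * D)
      + (p - r) * (c * (m2 - m1) + (t2 - t1)) + (q - r) * (c * (m1 - m2) + (t2 - t1))"
    by (simp add: sum_UNIV_bool_pair weight_def integral_abs_diff_piece_diagonal
        integral_abs_diff_piece_cross D_def m1_def m2_def algebra_simps)
  finally have "((1 - c) + c * (p + q - 2*r)) * D = (p + q - 2*r) * (t2 - t1) + c * (p - q) * (m2 - m1)"
    by algebra
  then have "((1 - c) * ((1 - c) + c * (p + q - 2*r))) * D
      = (t2 - t1) * (c * (p - q)^2 + (1 - c) * (p + q - 2*r))"
    using means by algebra
  moreover have "0 < (1 - c) * ((1 - c) + c * (p + q - 2*r))"
    using c r by (intro mult_pos_pos add_pos_nonneg) auto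
  ultimately show ?thesis
    unfolding D_def by (simp add: field_simps)
qed

lemma set_integral_attractor_square:
  assumes "f \<in> borel_measurable borel"
  shows "(\<integral>z \<in> attractor c t1 t2 \<times> attractor c t1 t2. f z \<partial>M) = integral\<^sup>L M f"
proof -
  have "attractor c t1 t2 \<times> attractor c t1 t2 \<in> sets borel"
    using compact_attractor[OF c(1) c_less_1 t(2)] by (intro borel_closed closed_Times compact_imp_closed)
  then show ?thesis
    unfolding set_lebesgue_integral_def using AE_in_attractor assms
    by (intro integral_cong_AE borel_measurable_M) auto
qed

end

theorem theorem2p1:
  fixes c t1 t2 p q r :: real and M :: "(real \<times> real) measure"
  assumes "0 < c" "c \<le> 1/2"
    and "0 \<le> t1" "t1 \<le> 1 - 2*c"
    and "t1 + c \<le> t2" "t2 \<le> 1 - c"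
    and "0 < p" "p < 1" "0 < q" "q < 1" "p \<noteq> q"
    and "max 0 (p + q - 1) < r" "r < min p q"
    and "is_gamma c t1 t2 p q r M"
  shows "(\<integral>z \<in> attractor c t1 t2 \<times> attractor c t1 t2. \<bar>fst z - snd z\<bar> \<partial>M)
       = (t2 - t1) / (1 - c) * ((c * (p - q)^2 + (1 - c) * (p + q - 2*r)) / ((1 - c) + c * (p + q - 2*r)))"
proof -
  interpret gamma_coupling c t1 t2 p q r M
    using assms by unfold_locales auto
  have "(\<lambda>z::real \<times> real. \<bar>fst z - snd z\<bar>) \<in> borel_measurable borel"
    by (intro borel_measurable_continuous_onI continuous_intros)
  then have "(\<integral>z \<in> attractor c t1 t2 \<times> attractor c t1 t2. \<bar>fst z - snd z\<bar> \<partial>M)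
      = (\<integral>z. \<bar>fst z - snd z\<bar> \<partial>M)"
    by (rule set_integral_attractor_square)
  also have "\<dots> = (t2 - t1) / (1 - c)
      * ((c * (p - q)^2 + (1 - c) * (p + q - 2*r)) / ((1 - c) + c * (p + q - 2*r)))"
    by (rule integral_abs_diff)
  finally show ?thesis .
qed

end
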